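(* There exists a setting (with pairwise distinct budgets) in which no envy-free assignment is realizable under the budget-oblivious second-price auction (BOSP).
   Context: Setting: there are $k\ge 1$ slots with public click-through rates $\theta_1>\theta_2>\dots>\theta_k>0$, and $n\ge k$ players. Player $i$ has a private value per click $v_i\ge 0$ and a budget $B_i>0$; the budgets $B_1,\dots,B_n$ are pairwise distinct. A setting consists of $k,n,(\theta_j),(v_i),(B_i)$ together with a fixed strict priority order on the players used to break all ties. Each player $i$ submits a value-bid $b_i\ge 0$ and a budget-bid $g_i\ge 0$; a mechanism outputs an injective partial slot assignment (assigned player $i$ gets slot $s(i)\in\{1,\dots,k\}$) and a price per click $p(i)\ge0$ for each assigned player; unassigned players pay nothing. The utility of player $i$ is $u_i=0$ if $i$ is unassigned, $u_i=\theta_{s(i)}(v_i-p(i))$ if $i$ is assigned and $\theta_{s(i)}p(i)\le B_i$, and $u_i=-\infty$ if $i$ is assigned and $\theta_{s(i)}p(i)>B_i$. BOSP: order the players by decreasing value-bid (ties broken by the priority order); for $j\le k$ the $j$-th player in this order gets slot $j$ and pays per click the value-bid of the $(j+1)$-th player in the order (0 if there is none); the remaining players are unassigned. Budget-bids are ignored. Envy-free assignment: an assignment of each of the $k$ slots to a distinct player, with a price per click $p(i)\ge 0$ for each assigned player $i$, such that for every player $i$ (assigned or not) and every assigned player $i'$ (including $i'=i$): $u_i\ge \max\{\theta_{s(i')}(v_i-p(i')),0\}$ if $\theta_{s(i')}p(i')\le B_i$, and $u_i\ge 0$ otherwise, where $u_i$ is player $i$'s utility in the assignment (computed with the true $v_i,B_i$).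 It is realizable under a mechanism if some bid profile $(b_i,g_i)_i$ makes the mechanism output exactly this slot assignment and these prices. *)

theory Defs
  imports Complex_Main "HOL-Library.Extended_Real"
begin

(* Players are 0..n-1, slots are 1..k. theta j is the CTR of slot j.
   pr is the priority order: pr i < pr i' means player i has priority over i'. *)

definition valid_setting ::
  "nat \<Rightarrow> nat \<Rightarrow> (nat \<Rightarrow> real) \<Rightarrow> (nat \<Rightarrow> real) \<Rightarrow> (nat \<Rightarrow> real) \<Rightarrow> (nat \<Rightarrow> nat) \<Rightarrow> bool" where
  "valid_setting k n theta v B pr \<longleftrightarrow>
     1 \<le> k \<and> k \<le> n \<and>
     (\<forall>j. 1 \<le> j \<and> j < k \<longrightarrow> theta (Suc j) < theta j) \<and> 0 < theta k \<and>
     (\<forall>i<n. 0 \<le> v i \<and> 0 < B i) \<and>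
     inj_on B {..<n} \<and> inj_on pr {..<n}"

definition utility ::
  "(nat \<Rightarrow> real) \<Rightarrow> (nat \<Rightarrow> real) \<Rightarrow> (nat \<Rightarrow> real) \<Rightarrow> (nat \<Rightarrow> nat option) \<Rightarrow> (nat \<Rightarrow> real) \<Rightarrow> nat \<Rightarrow> ereal" where
  "utility theta v B s p i =
     (case s i of None \<Rightarrow> 0
      | Some j \<Rightarrow> (if theta j * p i \<le> B i then ereal (theta j * (v i - p i)) else -\<infinity>))"

definition is_full_assignment ::
  "nat \<Rightarrow> nat \<Rightarrow> (nat \<Rightarrow> nat option) \<Rightarrow> (nat \<Rightarrow> real) \<Rightarrow> bool" where
  "is_full_assignment k n s p \<longleftrightarrow>
     (\<forall>i<n. \<forall>j. s i = Some j \<longrightarrow> 1 \<le> j \<and> j \<le> k \<and> 0 \<le> p i) \<and>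
     (\<forall>i<n. \<forall>i'<n. s i \<noteq> None \<and> s i = s i' \<longrightarrow> i = i') \<and>
     (\<forall>j. 1 \<le> j \<and> j \<le> k \<longrightarrow> (\<exists>i<n. s i = Some j))"

definition envy_free ::
  "nat \<Rightarrow> nat \<Rightarrow> (nat \<Rightarrow> real) \<Rightarrow> (nat \<Rightarrow> real) \<Rightarrow> (nat \<Rightarrow> real) \<Rightarrow> (nat \<Rightarrow> nat option) \<Rightarrow> (nat \<Rightarrow> real) \<Rightarrow> bool" where
  "envy_free k n theta v B s p \<longleftrightarrow>
     is_full_assignment k n s p \<and>
     (\<forall>i<n. \<forall>i'<n. \<forall>j. s i' = Some j \<longrightarrow>
        (if theta j * p i' \<le> B i
         then utility theta v B s p i \<ge> ereal (max (theta j * (v i - p i')) 0)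
         else utility theta v B s p i \<ge> 0))"

(* BOSP: 0-based position of player i in the order by decreasing value-bid, ties by priority *)
definition bosp_rank :: "nat \<Rightarrow> (nat \<Rightarrow> nat) \<Rightarrow> (nat \<Rightarrow> real) \<Rightarrow> nat \<Rightarrow> nat" where
  "bosp_rank n pr b i = card {i'. i' < n \<and> (b i' > b i \<or> (b i' = b i \<and> pr i' < pr i))}"

definition bosp_slot :: "nat \<Rightarrow> nat \<Rightarrow> (nat \<Rightarrow> nat) \<Rightarrow> (nat \<Rightarrow> real) \<Rightarrow> nat \<Rightarrow> nat option" where
  "bosp_slot k n pr b i = (if bosp_rank n pr b i < k then Some (Suc (bosp_rank n pr b i)) else None)"

definition bosp_price :: "nat \<Rightarrow> (nat \<Rightarrow> nat) \<Rightarrow> (nat \<Rightarrow> real) \<Rightarrow> nat \<Rightarrow> real" where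
  "bosp_price n pr b i =
     (if \<exists>i'<n. bosp_rank n pr b i' = Suc (bosp_rank n pr b i)
      then b (THE i'. i' < n \<and> bosp_rank n pr b i' = Suc (bosp_rank n pr b i))
      else 0)"

(* realizable: some bid profile (value-bids b, budget-bids g) makes BOSP output exactly s, p *)
definition realizable_bosp ::
  "nat \<Rightarrow> nat \<Rightarrow> (nat \<Rightarrow> nat) \<Rightarrow> (nat \<Rightarrow> nat option) \<Rightarrow> (nat \<Rightarrow> real) \<Rightarrow> bool" where
  "realizable_bosp k n pr s p \<longleftrightarrow>
     (\<exists>b g :: nat \<Rightarrow> real. (\<forall>i<n. 0 \<le> b i \<and> 0 \<le> g i) \<and>
        (\<forall>i<n. s i = bosp_slot k n pr b i) \<and>
        (\<forall>i<n. s i \<noteq> None \<longrightarrow> p i = bosp_price n pr b i))"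

end

theory Submission
  imports Defs
begin

text \<open>
  Take two slots with click-through rates 2 and 1 and three players who all value a click at 100,
  with budgets 3, 4 and 5. In an envy-free assignment the slot-1 winner pays at most 5/2 per click
  by budget feasibility, and the loser, who would gladly take slot 2 at any price below 100, can
  only be kept from envying its winner if that price exceeds the loser's budget of at least 3.
  So the slot-2 price is strictly higher than the slot-1 price, whereas BOSP prices weakly
  decrease down the slots: the slot-1 price is the bid of the slot-2 winner, which is at least
  the bid of the player ranked next, i.e. the slot-2 price.
\<close>

lemma bosp_rank_less:
  assumes "i < n" "i' < n" "b i < b i' \<or> (b i' = b i \<and> pr i' < pr i)"
  shows "bosp_rank n pr b i' < bosp_rank n pr b i"
  unfolding bosp_rank_def
proof (rule psubset_card_mono)
  let ?ahead = "\<lambda>x. {y. y < n \<and> (b x < b y \<or> (b y = b x \<and> pr y < pr x))}"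
  have "?ahead i' \<subseteq> ?ahead i"
    using assms(3) by auto
  moreover have "i' \<in> ?ahead i - ?ahead i'"
    using assms by auto
  ultimately show "?ahead i' \<subset> ?ahead i"
    by blast
qed simp

lemma inj_on_bosp_rank:
  assumes "inj_on pr {..<n}"
  shows "inj_on (bosp_rank n pr b) {..<n}"
proof (rule inj_onI)
  fix i i' assume i: "i \<in> {..<n}" and i': "i' \<in> {..<n}"
    and eq: "bosp_rank n pr b i = bosp_rank n pr b i'"
  show "i = i'"
  proof (rule ccontr)
    assume "i \<noteq> i'"
    then have "pr i \<noteq> pr i'"
      using assms i i' by (auto dest: inj_onD)
    then have "(b i < b i' \<or> (b i' = b i \<and> pr i' < pr i)) \<or>
               (b i' < b i \<or> (b i = b i' \<and> pr i < pr i'))"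
      by linarith
    then show False
      using bosp_rank_less[of i n i' b pr] bosp_rank_less[of i' n i b pr] i i' eq by auto
  qed
qed

lemma bosp_bid_antimono:
  assumes "i < n" "i' < n" "bosp_rank n pr b i < bosp_rank n pr b i'"
  shows "b i' \<le> b i"
proof (rule ccontr)
  assume "\<not> b i' \<le> b i"
  then have "bosp_rank n pr b i' < bosp_rank n pr b i"
    using bosp_rank_less[of i n i' b pr] assms(1,2) by simp
  then show False
    using assms(3) by simp
qed

lemma bosp_price_eq_next_bid:
  assumes "inj_on pr {..<n}" "i' < n" "bosp_rank n pr b i' = Suc (bosp_rank n pr b i)"
  shows "bosp_price n pr b i = b i'"
proof -
  have "(THE x. x < n \<and> bosp_rank n pr b x = Suc (bosp_rank n pr b i)) = i'"
  proof (rule the_equality)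
    fix x assume "x < n \<and> bosp_rank n pr b x = Suc (bosp_rank n pr b i)"
    then show "x = i'"
      using assms(2,3) inj_onD[OF inj_on_bosp_rank[OF assms(1), of b], of x i'] by simp
  qed (use assms(2,3) in simp)
  then show ?thesis
    using assms(2,3) unfolding bosp_price_def by auto
qed

lemma bosp_price_le_bid:
  assumes "inj_on pr {..<n}" "\<forall>x<n. 0 \<le> b x" "i < n"
  shows "bosp_price n pr b i \<le> b i"
proof (cases "\<exists>i'<n. bosp_rank n pr b i' = Suc (bosp_rank n pr b i)")
  case True
  then obtain i' where "i' < n" "bosp_rank n pr b i' = Suc (bosp_rank n pr b i)"
    by blast
  then show ?thesis
    using bosp_price_eq_next_bid[OF assms(1)] bosp_bid_antimono[of i n i' pr b] assms(3)
    by simp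
next
  case False
  then show ?thesis
    using assms(2,3) unfolding bosp_price_def by auto
qed

lemma bosp_slot_eq_Some_Suc_iff:
  "bosp_slot k n pr b i = Some (Suc r) \<longleftrightarrow> bosp_rank n pr b i = r \<and> r < k"
  unfolding bosp_slot_def by auto

lemma realizable_bosp_price_antimono:
  assumes "realizable_bosp k n pr s p" "inj_on pr {..<n}" "i < n" "i' < n"
    "s i = Some (Suc j)" "s i' = Some (Suc (Suc j))"
  shows "p i' \<le> p i"
proof -
  obtain b where b_nonneg: "\<forall>x<n. 0 \<le> b x"
    and slot: "\<forall>x<n. s x = bosp_slot k n pr b x"
    and price: "\<forall>x<n. s x \<noteq> None \<longrightarrow> p x = bosp_price n pr b x"
    using assms(1) unfolding realizable_bosp_def by blast
  have "bosp_rank n pr b i' = Suc (bosp_rank n pr b i)"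
    using slot assms(3-6) bosp_slot_eq_Some_Suc_iff by metis
  then have "p i = b i'"
    using price bosp_price_eq_next_bid[OF assms(2,4)] assms(3,5) by simp
  moreover have "p i' = bosp_price n pr b i'"
    using price assms(4,6) by simp
  then have "p i' \<le> b i'"
    using bosp_price_le_bid[OF assms(2) b_nonneg assms(4)] by simp
  ultimately show ?thesis
    by simp
qed

lemma envy_free_budget_feasible:
  assumes "envy_free k n theta v B s p" "i < n" "s i = Some j"
  shows "theta j * p i \<le> B i"
proof (rule ccontr)
  assume "\<not> theta j * p i \<le> B i"
  moreover have "utility theta v B s p i = -\<infinity>"
    using assms(3) calculation unfolding utility_def by simp
  ultimately show False
    using assms unfolding envy_free_def by fastforce
qed

lemma envy_free_unassigned_priced_out:
  assumes "envy_free k n theta v B s p" "i < n" "s i = None" "i' < n" "s i' = Some j"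
    "0 < theta j" "p i' < v i"
  shows "B i < theta j * p i'"
proof (rule ccontr)
  assume "\<not> B i < theta j * p i'"
  then have "ereal (max (theta j * (v i - p i')) 0) \<le> 0"
    using assms(1-5) unfolding envy_free_def utility_def by fastforce
  moreover have "0 < theta j * (v i - p i')"
    using assms(6,7) by simp
  ultimately show False
    by (simp add: zero_ereal_def)
qed

lemma full_assignment_has_unassigned:
  assumes "is_full_assignment k n s p" "k < n"
  obtains i where "i < n" "s i = None"
proof (rule ccontr)
  assume "\<not> thesis"
  with that have assigned: "\<forall>i<n. s i \<noteq> None"
    by blast
  have "inj_on (\<lambda>i. the (s i)) {..<n}"
    using assms(1) assigned unfolding is_full_assignment_def inj_on_def
    by (metis lessThan_iff option.expand)
  moreover have "(\<lambda>i. the (s i)) ` {..<n} \<subseteq> {1..k}"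
    using assms(1) assigned unfolding is_full_assignment_def by fastforce
  ultimately have "card {..<n} \<le> card {1..k}"
    by (intro card_inj_on_le) auto
  then show False
    using assms(2) by simp
qed

abbreviation ctr :: "nat \<Rightarrow> real" where
  "ctr \<equiv> \<lambda>j. if j = 1 then 2 else if j = 2 then 1 else 0"

abbreviation budget :: "nat \<Rightarrow> real" where
  "budget \<equiv> \<lambda>i. real i + 3"

lemma valid_counterexample_setting: "valid_setting 2 3 ctr (\<lambda>_. 100) budget id"
  unfolding valid_setting_def
proof (intro conjI allI impI)
  fix j :: nat assume "1 \<le> j \<and> j < 2"
  then show "ctr (Suc j) < ctr j"
    by simp
qed (auto simp: inj_on_def)

lemma counterexample_not_realizable:
  assumes ef: "envy_free 2 3 ctr (\<lambda>_. 100) budget s p" and re: "realizable_bosp 2 3 id s p"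
  shows False
proof -
  have full: "is_full_assignment 2 3 s p"
    using ef unfolding envy_free_def by blast
  have slots_filled: "\<And>j. 1 \<le> j \<Longrightarrow> j \<le> 2 \<Longrightarrow> \<exists>i<3. s i = Some j"
    using full unfolding is_full_assignment_def by blast
  obtain a1 where a1: "a1 < 3" "s a1 = Some 1"
    using slots_filled[of 1] by auto
  obtain a2 where a2: "a2 < 3" "s a2 = Some 2"
    using slots_filled[of 2] by auto
  obtain c where c: "c < 3" "s c = None"
    using full_assignment_has_unassigned[OF full] by auto
  have "2 * p a1 \<le> budget a1"
    using envy_free_budget_feasible[OF ef a1] by simp
  then have "p a1 \<le> 5 / 2"
    using a1(1) by simp
  moreover have "p a2 \<le> budget a2"
    using envy_free_budget_feasible[OF ef a2] by simp
  then have "budget c < p a2"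
    using envy_free_unassigned_priced_out[OF ef c a2] a2(1) by simp
  then have "3 < p a2"
    by simp
  moreover have "p a2 \<le> p a1"
    using realizable_bosp_price_antimono[OF re _ a1(1) a2(1)] a1(2) a2(2)
    by (simp add: numeral_2_eq_2)
  ultimately show False
    by simp
qed

theorem corollary1:
  shows "\<exists>k n theta v B pr. valid_setting k n theta v B pr \<and>
           \<not> (\<exists>s p. envy_free k n theta v B s p \<and> realizable_bosp k n pr s p)"
  using valid_counterexample_setting counterexample_not_realizable by blast

end
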